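(* For every integer $d\ge3$, the number of binomials of degree $d$ in the set $\mathcal{G}'=\{g^{\mathbf{s}}:\mathbf{s}\in\{1,2\}^n,n\in\mathbb{N}_0\}$ equals the Fibonacci number $F_{d-3}$.
   Context: Fibonacci numbers: $F_0=0$, $F_1=1$, $F_{n+2}=F_{n+1}+F_n$. The binomials live in $R=\mathbb{K}[x_{i,i+1},x_{i,i+2}: i\in\mathbb{N}]$ ($\mathbb{K}$ a field). Let $E=\{[i,i+1],[i,i+2]:i\in\mathbb{N}\}$, totally ordered by $[i,j]\le[k,l]$ iff $i\le k$ and $j\le l$. For a binomial $g=\prod x_{i,j}^{u_{i,j}}-\prod x_{i,j}^{v_{i,j}}$, $w_g([i,j])=u_{i,j}-v_{i,j}$; a finitely supported $w:E\to\mathbb{Z}$ has associated binomial $\prod x_{i,j}^{\max(w([i,j]),0)}-\prod x_{i,j}^{\max(-w([i,j]),0)}$. A vertex $n$ is adjacent to $g$ if $n\in\{i,j\}$ for some $[i,j]$ with $w_g([i,j])\ne0$. Let $g^{\emptyset}=x_{1,2}x_{3,5}^2x_{6,7}-x_{1,3}x_{2,3}x_{5,6}x_{5,7}$; recursively, for $\mathbf{s}=(s_1,\dots,s_n)$ with $w=w_{g^{\mathbf{s}}}$ and $k$ the largest vertex adjacent to $g^{\mathbf{s}}$, $g^{(s_1,\dots,s_n,1)}$ is the binomial of the weight $[i,j]\mapsto w([i,j])$ if $[i,j]\le[k-4,k-2]$, $2w([i,j])$ if $[i,j]=[k-2,k]$, $-w([i-2,j-2])$ if $[i,j]\ge[k,k+1]$,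 $0$ otherwise; and $g^{(s_1,\dots,s_n,2)}$ is the binomial of the weight $[i,j]\mapsto w([i,j])$ if $[i,j]\le[k-4,k-2]$, $2w([i,j])$ if $[i,j]=[k-2,k-1]$, $-2w([k-2,k-1])$ if $[i,j]=[k-1,k+1]$, $w([i-3,j-3])$ if $[i,j]\ge[k+1,k+2]$, $0$ otherwise. *)

theory Defs
  imports "HOL-Number_Theory.Fib"
begin

text \<open>Weights are integer functions on pairs (zero outside E).
  A monomial is an exponent function on pairs; a binomial is represented by
  its pair of monomials (u, v), standing for u - v.\<close>

type_synonym edge = "nat \<times> nat"
type_synonym weight = "edge \<Rightarrow> int"
type_synonym monomial = "edge \<Rightarrow> nat"
type_synonym binomial = "monomial \<times> monomial"

definition Edges :: "edge set" where
  "Edges = {(i, i + 1) | i. True} \<union> {(i, i + 2) | i. True}"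

definition edge_le :: "edge \<Rightarrow> edge \<Rightarrow> bool" where
  "edge_le e f \<longleftrightarrow> fst e \<le> fst f \<and> snd e \<le> snd f"

definition weight_of :: "binomial \<Rightarrow> weight" where
  "weight_of g = (\<lambda>e. int (fst g e) - int (snd g e))"

definition binom_of :: "weight \<Rightarrow> binomial" where
  "binom_of w = ((\<lambda>e. nat (max (w e) 0)), (\<lambda>e. nat (max (- w e) 0)))"

definition mono_deg :: "monomial \<Rightarrow> nat" where
  "mono_deg m = (\<Sum>e\<in>{e. m e \<noteq> 0}. m e)"

definition binom_deg :: "binomial \<Rightarrow> nat" where
  "binom_deg g = max (mono_deg (fst g)) (mono_deg (snd g))"

definition max_adj :: "binomial \<Rightarrow> nat" where
  "max_adj g = Max {n. \<exists>i j. (i, j) \<in> Edges \<and> weight_of g (i, j) \<noteq> 0 \<and> (n = i \<or> n = j)}"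

definition g_empty :: binomial where
  "g_empty =
     ((\<lambda>e. if e = (1,2) then 1 else if e = (3,5) then 2 else if e = (6,7) then 1 else 0),
      (\<lambda>e. if e = (1,3) \<or> e = (2,3) \<or> e = (5,6) \<or> e = (5,7) then 1 else 0))"

definition step1 :: "binomial \<Rightarrow> binomial" where
  "step1 g = (let w = weight_of g; k = max_adj g in binom_of (\<lambda>(i, j).
      if (i, j) \<notin> Edges then 0
      else if edge_le (i, j) (k - 4, k - 2) then w (i, j)
      else if (i, j) = (k - 2, k) then 2 * w (i, j)
      else if edge_le (k, k + 1) (i, j) then - w (i - 2, j - 2)
      else 0))"

definition step2 :: "binomial \<Rightarrow> binomial" where
  "step2 g = (let w = weight_of g; k = max_adj g in binom_of (\<lambda>(i, j).
      if (i, j) \<notin> Edges then 0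
      else if edge_le (i, j) (k - 4, k - 2) then w (i, j)
      else if (i, j) = (k - 2, k - 1) then 2 * w (i, j)
      else if (i, j) = (k - 1, k + 1) then - 2 * w (k - 2, k - 1)
      else if edge_le (k + 1, k + 2) (i, j) then w (i - 3, j - 3)
      else 0))"

definition step :: "nat \<Rightarrow> binomial \<Rightarrow> binomial" where
  "step a g = (if a = 1 then step1 g else step2 g)"

definition g_seq :: "nat list \<Rightarrow> binomial" where
  "g_seq s = foldl (\<lambda>g a. step a g) g_empty s"

definition G' :: "binomial set" where
  "G' = {g_seq s | s. set s \<subseteq> {1, 2}}"

end

theory Submission
  imports Defs
begin

(* Every g^s ends in the same local pattern: if k = m + 7 is its largest vertex, its weight
   vanishes on [k-3,k-2] and [k-3,k-1] and equals -\<sigma>, -\<sigma>, \<sigma> on [k-2,k-1], [k-2,k], [k-1,k]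
   for a sign \<sigma>, exactly as for g^\<emptyset> (k = 7, \<sigma> = 1).  On such a weight the two steps are
   explicit local rewrites which reproduce the pattern at k + 2 resp. k + 3 and raise the degree
   of both monomials by 1 resp. 2, so g^s has degree 4 + s_1 + ... + s_n.  The pattern also
   reveals the last step (the weight of [k-5,k-4] vanishes exactly after a step 1) and allows
   to undo it, so s \<mapsto> g^s is injective.  Hence the binomials of degree d correspond to the
   compositions of d - 4 into parts 1 and 2, of which there are F_(d-3). *)

lemma weight_of_binom_of [simp]: "weight_of (binom_of w) = w"
  unfolding weight_of_def binom_of_def by (auto simp: max_def)

lemma Edges_iff: "(i, j) \<in> Edges \<longleftrightarrow> j = i + 1 \<or> j = i + 2"
  unfolding Edges_def by auto

lemma mono_deg_fun_upd:
  assumes "finite {e. f e \<noteq> 0}"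
  shows "int (mono_deg (f(x := y))) = int (mono_deg f) + int y - int (f x)"
proof -
  let ?S = "insert x {e. f e \<noteq> 0}"
  have eq: "mono_deg g = sum g ?S" if "{e. g e \<noteq> 0} \<subseteq> ?S" for g
    unfolding mono_deg_def using assms that by (intro sum.mono_neutral_left) auto
  have S: "finite ?S" "x \<in> ?S" using assms by auto
  have "mono_deg (f(x := y)) = sum (f(x := y)) ?S" by (rule eq) auto
  also have "\<dots> = y + sum f (?S - {x})" by (subst sum.remove[OF S]) auto
  finally have "mono_deg (f(x := y)) = y + sum f (?S - {x})" .
  moreover have "mono_deg f = f x + sum f (?S - {x})"
    using eq[of f] sum.remove[OF S, of f] by auto
  ultimately show ?thesis by simp
qed

definition pos_deg :: "weight \<Rightarrow> nat" where
  "pos_deg w = mono_deg (fst (binom_of w))"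

lemma binom_deg_binom_of: "binom_deg (binom_of w) = max (pos_deg w) (pos_deg (- w))"
  by (simp add: binom_deg_def pos_deg_def binom_of_def)

definition finite_support :: "weight \<Rightarrow> bool" where
  "finite_support w \<longleftrightarrow> finite {e. w e \<noteq> 0}"

lemma finite_support_fun_upd [simp]: "finite_support w \<Longrightarrow> finite_support (w(x := y))"
  unfolding finite_support_def by (rule finite_subset[of _ "insert x {e. w e \<noteq> 0}"]) auto

lemma pos_deg_fun_upd [simp]:
  assumes "finite_support w"
  shows "int (pos_deg (w(x := y))) = int (pos_deg w) + max y 0 - max (w x) 0"
proof -
  let ?p = "fst (binom_of w)"
  have upd: "fst (binom_of (w(x := y))) = ?p(x := nat (max y 0))"
    by (auto simp: binom_of_def)
  have "finite {e. ?p e \<noteq> 0}"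
    by (rule finite_subset[OF _ assms[unfolded finite_support_def]]) (auto simp: binom_of_def)
  then show ?thesis
    using mono_deg_fun_upd[of ?p x "nat (max y 0)"] unfolding pos_deg_def upd
    by (simp add: binom_of_def)
qed

definition supported_upto :: "weight \<Rightarrow> nat \<Rightarrow> bool" where
  "supported_upto w k \<longleftrightarrow> (\<forall>i j. w (i, j) \<noteq> 0 \<longrightarrow> (i, j) \<in> Edges \<and> j \<le> k)"

lemma supported_upto_mono: "supported_upto w k \<Longrightarrow> k \<le> l \<Longrightarrow> supported_upto w l"
  unfolding supported_upto_def by fastforce

lemma supported_upto_fun_upd [simp]:
  "supported_upto w k \<Longrightarrow> j \<le> k \<Longrightarrow> j = i + 1 \<or> j = i + 2 \<Longrightarrow>
    supported_upto (w((i, j) := y)) k"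
  unfolding supported_upto_def by (auto simp: Edges_iff)

lemma supported_upto_uminus [simp]: "supported_upto (- w) k \<longleftrightarrow> supported_upto w k"
  unfolding supported_upto_def by simp

lemma supported_upto_off_Edges: "supported_upto w k \<Longrightarrow> (i, j) \<notin> Edges \<Longrightarrow> w (i, j) = 0"
  unfolding supported_upto_def by blast

lemma supported_upto_finite_support:
  assumes "supported_upto w k"
  shows "finite_support w"
  unfolding finite_support_def
proof (rule finite_subset[of _ "{..k} \<times> {..k}"])
  show "{e. w e \<noteq> 0} \<subseteq> {..k} \<times> {..k}"
    using assms unfolding supported_upto_def by (force simp: Edges_iff)
qed auto

definition tail_shape :: "weight \<Rightarrow> nat \<Rightarrow> int \<Rightarrow> bool" where
  "tail_shape w m \<sigma> \<longleftrightarrow> (\<sigma> = 1 \<or> \<sigma> = -1) \<and> supported_upto w (m + 7) \<and>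
     w (m+4, m+5) = 0 \<and> w (m+4, m+6) = 0 \<and>
     w (m+5, m+6) = - \<sigma> \<and> w (m+5, m+7) = - \<sigma> \<and> w (m+6, m+7) = \<sigma>"

definition extend1 :: "weight \<Rightarrow> nat \<Rightarrow> int \<Rightarrow> weight" where
  "extend1 w m \<sigma> = w((m+5, m+6) := 0, (m+5, m+7) := -2 * \<sigma>, (m+6, m+7) := 0,
     (m+7, m+8) := \<sigma>, (m+7, m+9) := \<sigma>, (m+8, m+9) := - \<sigma>)"

definition extend2 :: "weight \<Rightarrow> nat \<Rightarrow> int \<Rightarrow> weight" where
  "extend2 w m \<sigma> = w((m+5, m+6) := -2 * \<sigma>, (m+5, m+7) := 0, (m+6, m+7) := 0,
     (m+6, m+8) := 2 * \<sigma>, (m+8, m+9) := - \<sigma>, (m+8, m+10) := - \<sigma>, (m+9, m+10) := \<sigma>)"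

lemma tail_shape_uminus: "tail_shape w m \<sigma> \<Longrightarrow> tail_shape (- w) m (- \<sigma>)"
  unfolding tail_shape_def by auto

lemma uminus_extend1: "- extend1 w m \<sigma> = extend1 (- w) m (- \<sigma>)"
  unfolding extend1_def by (auto simp: fun_eq_iff)

lemma uminus_extend2: "- extend2 w m \<sigma> = extend2 (- w) m (- \<sigma>)"
  unfolding extend2_def by (auto simp: fun_eq_iff)

lemma tail_shape_beyond:
  assumes "tail_shape w m \<sigma>" and "m + 7 < j"
  shows "w (i, j) = 0"
  using assms unfolding tail_shape_def supported_upto_def by fastforce

lemma tail_shape_extend1:
  assumes "tail_shape w m \<sigma>"
  shows "tail_shape (extend1 w m \<sigma>) (m + 2) (- \<sigma>)"
proof -
  have "supported_upto w (m + 9)"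
    using assms supported_upto_mono[of w "m + 7"] unfolding tail_shape_def by simp
  moreover have "w (m + 6, m + 8) = 0" using tail_shape_beyond[OF assms] by simp
  ultimately show ?thesis
    using assms unfolding tail_shape_def extend1_def add.assoc by auto
qed

lemma tail_shape_extend2:
  assumes "tail_shape w m \<sigma>"
  shows "tail_shape (extend2 w m \<sigma>) (m + 3) \<sigma>"
proof -
  have "supported_upto w (m + 10)"
    using assms supported_upto_mono[of w "m + 7"] unfolding tail_shape_def by simp
  moreover have "w (m + 7, m + 8) = 0" "w (m + 7, m + 9) = 0"
    using tail_shape_beyond[OF assms] by simp_all
  ultimately show ?thesis
    using assms unfolding tail_shape_def extend2_def add.assoc by auto
qed

lemma pos_deg_extend1:
  assumes "tail_shape w m \<sigma>"
  shows "pos_deg (extend1 w m \<sigma>) = pos_deg w + 1"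
proof -
  have "finite_support w"
    using assms supported_upto_finite_support unfolding tail_shape_def by blast
  moreover have "w (m + 7, m + 8) = 0" "w (m + 7, m + 9) = 0" "w (m + 8, m + 9) = 0"
    using tail_shape_beyond[OF assms] by simp_all
  ultimately have "int (pos_deg (extend1 w m \<sigma>)) = int (pos_deg w) + 1"
    using assms unfolding extend1_def tail_shape_def by auto
  then show ?thesis by simp
qed

lemma pos_deg_extend2:
  assumes "tail_shape w m \<sigma>"
  shows "pos_deg (extend2 w m \<sigma>) = pos_deg w + 2"
proof -
  have "finite_support w"
    using assms supported_upto_finite_support unfolding tail_shape_def by blast
  moreover have "w (m + 6, m + 8) = 0" "w (m + 8, m + 9) = 0" "w (m + 8, m + 10) = 0"
    "w (m + 9, m + 10) = 0"
    using tail_shape_beyond[OF assms] by simp_all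
  ultimately have "int (pos_deg (extend2 w m \<sigma>)) = int (pos_deg w) + 2"
    using assms unfolding extend2_def tail_shape_def by auto
  then show ?thesis by simp
qed

lemma max_adj_binom_of:
  assumes "tail_shape w m \<sigma>"
  shows "max_adj (binom_of w) = m + 7"
proof -
  let ?V = "{n. \<exists>i j. (i, j) \<in> Edges \<and> w (i, j) \<noteq> 0 \<and> (n = i \<or> n = j)}"
  have "?V \<subseteq> {..m + 7}"
  proof
    fix n assume "n \<in> ?V"
    then obtain i j where "(i, j) \<in> Edges" "w (i, j) \<noteq> 0" "n = i \<or> n = j" by blast
    moreover have "j \<le> m + 7"
      using assms calculation(2) unfolding tail_shape_def supported_upto_def by blast
    ultimately show "n \<in> {..m + 7}" by (auto simp: Edges_iff)
  qed
  moreover have "m + 7 \<in> ?V"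
  proof -
    have "(m + 6, m + 7) \<in> Edges" "w (m + 6, m + 7) \<noteq> 0"
      using assms unfolding tail_shape_def by (auto simp: Edges_iff)
    then show ?thesis by blast
  qed
  ultimately show ?thesis
    unfolding max_adj_def weight_of_binom_of by (intro Max_eqI) (auto intro: finite_subset)
qed

lemma weight_step1_binom_of:
  assumes "tail_shape w m \<sigma>"
  shows "weight_of (step1 (binom_of w)) (i, j) = extend1 w m \<sigma> (i, j)"
proof -
  have off: "w (i, j) = 0" if "(i, j) \<notin> Edges"
    using assms supported_upto_off_Edges that unfolding tail_shape_def by blast
  note defs = step1_def Let_def max_adj_binom_of[OF assms] weight_of_binom_of prod.case
    extend1_def edge_le_def
  consider "i \<le> m + 3" | "m + 4 \<le> i" "i \<le> m + 8" | "m + 9 \<le> i"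
    by linarith
  then show ?thesis
  proof cases
    case 1
    then show ?thesis unfolding defs using off by (auto simp: Edges_iff)
  next
    case 2
    then have "i = m + 4 \<or> i = m + 5 \<or> i = m + 6 \<or> i = m + 7 \<or> i = m + 8" by linarith
    then show ?thesis unfolding defs using off assms[unfolded tail_shape_def]
      by (elim disjE) (auto simp: Edges_iff tail_shape_beyond[OF assms] add.commute)
  next
    case 3
    then show ?thesis
      unfolding defs using off by (auto simp: Edges_iff tail_shape_beyond[OF assms])
  qed
qed

lemma weight_step2_binom_of:
  assumes "tail_shape w m \<sigma>"
  shows "weight_of (step2 (binom_of w)) (i, j) = extend2 w m \<sigma> (i, j)"
proof -
  have off: "w (i, j) = 0" if "(i, j) \<notin> Edges"
    using assms supported_upto_off_Edges that unfolding tail_shape_def by blast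
  note defs = step2_def Let_def max_adj_binom_of[OF assms] weight_of_binom_of prod.case
    extend2_def edge_le_def
  consider "i \<le> m + 3" | "m + 4 \<le> i" "i \<le> m + 9" | "m + 10 \<le> i"
    by linarith
  then show ?thesis
  proof cases
    case 1
    then show ?thesis unfolding defs using off by (auto simp: Edges_iff)
  next
    case 2
    then have "i = m + 4 \<or> i = m + 5 \<or> i = m + 6 \<or> i = m + 7 \<or> i = m + 8 \<or> i = m + 9"
      by linarith
    then show ?thesis unfolding defs using off assms[unfolded tail_shape_def]
      by (elim disjE) (auto simp: Edges_iff tail_shape_beyond[OF assms] add.commute)
  next
    case 3
    then show ?thesis
      unfolding defs using off by (auto simp: Edges_iff tail_shape_beyond[OF assms])
  qed
qed

lemma step1_binom_of:
  assumes "tail_shape w m \<sigma>"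
  shows "step1 (binom_of w) = binom_of (extend1 w m \<sigma>)"
proof -
  have "step1 (binom_of w) = binom_of (weight_of (step1 (binom_of w)))"
    by (simp add: step1_def Let_def)
  also have "weight_of (step1 (binom_of w)) = extend1 w m \<sigma>"
    by (simp add: fun_eq_iff weight_step1_binom_of[OF assms])
  finally show ?thesis .
qed

lemma step2_binom_of:
  assumes "tail_shape w m \<sigma>"
  shows "step2 (binom_of w) = binom_of (extend2 w m \<sigma>)"
proof -
  have "step2 (binom_of w) = binom_of (weight_of (step2 (binom_of w)))"
    by (simp add: step2_def Let_def)
  also have "weight_of (step2 (binom_of w)) = extend2 w m \<sigma>"
    by (simp add: fun_eq_iff weight_step2_binom_of[OF assms])
  finally show ?thesis .
qed

lemma tail_shape_unique:
  assumes "tail_shape w m \<sigma>" and "tail_shape w n \<tau>"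
  shows "m = n \<and> \<sigma> = \<tau>"
proof -
  have "m + 7 \<le> n + 7"
    using assms tail_shape_beyond[OF assms(2), of "m + 7" "m + 6"] unfolding tail_shape_def
    by force
  moreover have "n + 7 \<le> m + 7"
    using assms tail_shape_beyond[OF assms(1), of "n + 7" "n + 6"] unfolding tail_shape_def
    by force
  ultimately show ?thesis
    using assms unfolding tail_shape_def by auto
qed

lemma extend1_inj:
  assumes "tail_shape w m \<sigma>" and "tail_shape v m \<sigma>" and "extend1 w m \<sigma> = extend1 v m \<sigma>"
  shows "w = v"
proof -
  have "u = (extend1 u m \<sigma>)((m+5, m+6) := - \<sigma>, (m+5, m+7) := - \<sigma>, (m+6, m+7) := \<sigma>,
      (m+7, m+8) := 0, (m+7, m+9) := 0, (m+8, m+9) := 0)"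
    if "tail_shape u m \<sigma>" for u
    using that tail_shape_beyond[OF that] unfolding tail_shape_def extend1_def
    by (auto simp: fun_eq_iff)
  then show ?thesis using assms by metis
qed

lemma extend2_inj:
  assumes "tail_shape w m \<sigma>" and "tail_shape v m \<sigma>" and "extend2 w m \<sigma> = extend2 v m \<sigma>"
  shows "w = v"
proof -
  have "u = (extend2 u m \<sigma>)((m+5, m+6) := - \<sigma>, (m+5, m+7) := - \<sigma>, (m+6, m+7) := \<sigma>,
      (m+6, m+8) := 0, (m+8, m+9) := 0, (m+8, m+10) := 0, (m+9, m+10) := 0)"
    if "tail_shape u m \<sigma>" for u
    using that tail_shape_beyond[OF that] unfolding tail_shape_def extend2_def
    by (auto simp: fun_eq_iff)
  then show ?thesis using assms by metis
qed

lemma extend1_neq_extend2: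
  assumes "tail_shape w (n + 1) \<sigma>" and "tail_shape v n \<tau>"
  shows "extend1 w (n + 1) \<sigma> \<noteq> extend2 v n \<tau>"
proof -
  have "extend1 w (n + 1) \<sigma> (n + 5, n + 6) = 0" "extend2 v n \<tau> (n + 5, n + 6) \<noteq> 0"
    using assms unfolding tail_shape_def extend1_def extend2_def by (auto simp: add.commute)
  then show ?thesis by metis
qed

lemma step_binom_of_inj:
  assumes w: "tail_shape w m \<sigma>" and v: "tail_shape v n \<tau>" and "a \<in> {1, 2}" "b \<in> {1, 2}"
    and eq: "step a (binom_of w) = step b (binom_of v)"
  shows "a = b \<and> w = v"
proof -
  consider "a = 1" "b = 1" | "a = 1" "b = 2" | "a = 2" "b = 1" | "a = 2" "b = 2"
    using assms(3,4) by blast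
  then show ?thesis
  proof cases
    case 1
    then have "extend1 w m \<sigma> = extend1 v n \<tau>"
      using arg_cong[OF eq, of weight_of]
      by (simp add: step_def step1_binom_of[OF w] step1_binom_of[OF v])
    moreover have "m = n \<and> \<sigma> = \<tau>"
      using tail_shape_unique tail_shape_extend1[OF w] tail_shape_extend1[OF v] calculation
      by fastforce
    ultimately show ?thesis using extend1_inj w v 1 by blast
  next
    case 2
    then have "extend1 w m \<sigma> = extend2 v n \<tau>"
      using arg_cong[OF eq, of weight_of]
      by (simp add: step_def step1_binom_of[OF w] step2_binom_of[OF v])
    moreover have "m = n + 1"
      using tail_shape_unique tail_shape_extend1[OF w] tail_shape_extend2[OF v] calculation
      by fastforce
    ultimately show ?thesis using extend1_neq_extend2 w v by blast
  next
    case 3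
    then have "extend1 v n \<tau> = extend2 w m \<sigma>"
      using arg_cong[OF eq, of weight_of]
      by (simp add: step_def step1_binom_of[OF v] step2_binom_of[OF w])
    moreover have "n = m + 1"
      using tail_shape_unique tail_shape_extend1[OF v] tail_shape_extend2[OF w] calculation
      by fastforce
    ultimately show ?thesis using extend1_neq_extend2 w v by blast
  next
    case 4
    then have "extend2 w m \<sigma> = extend2 v n \<tau>"
      using arg_cong[OF eq, of weight_of]
      by (simp add: step_def step2_binom_of[OF w] step2_binom_of[OF v])
    moreover have "m = n \<and> \<sigma> = \<tau>"
      using tail_shape_unique tail_shape_extend2[OF w] tail_shape_extend2[OF v] calculation
      by fastforce
    ultimately show ?thesis using extend2_inj w v 4 by blast
  qed
qed

lemma pos_deg_uminus: "pos_deg (- w) = mono_deg (snd (binom_of w))"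
  by (simp add: pos_deg_def binom_of_def)

lemma binom_of_weight_of_g_empty: "binom_of (weight_of g_empty) = g_empty"
  unfolding g_empty_def binom_of_def weight_of_def by (auto simp: fun_eq_iff)

lemma tail_shape_g_empty: "tail_shape (weight_of g_empty) 0 1"
  unfolding tail_shape_def supported_upto_def g_empty_def weight_of_def by (auto simp: Edges_iff)

lemma mono_deg_g_empty: "mono_deg (fst g_empty) = 4" "mono_deg (snd g_empty) = 4"
proof -
  have "{e. fst g_empty e \<noteq> 0} = {(1, 2), (3, 5), (6, 7)}"
    "{e. snd g_empty e \<noteq> 0} = {(1, 3), (2, 3), (5, 6), (5, 7)}"
    by (auto simp: g_empty_def)
  then show "mono_deg (fst g_empty) = 4" "mono_deg (snd g_empty) = 4"
    unfolding mono_deg_def by (simp_all add: g_empty_def)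
qed

lemma g_seq_tail_shape:
  assumes "set s \<subseteq> {1, 2}"
  shows "\<exists>w m \<sigma>. g_seq s = binom_of w \<and> tail_shape w m \<sigma> \<and>
    pos_deg w = 4 + sum_list s \<and> pos_deg (- w) = 4 + sum_list s"
  using assms
proof (induction s rule: rev_induct)
  case Nil
  have "g_seq [] = binom_of (weight_of g_empty)"
    by (simp add: g_seq_def binom_of_weight_of_g_empty)
  moreover have "pos_deg (weight_of g_empty) = 4"
    by (simp only: pos_deg_def binom_of_weight_of_g_empty mono_deg_g_empty)
  moreover have "pos_deg (- weight_of g_empty) = 4"
    by (simp only: pos_deg_uminus binom_of_weight_of_g_empty mono_deg_g_empty)
  ultimately show ?case unfolding sum_list.Nil add_0_right using tail_shape_g_empty by blast
next
  case (snoc a s)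
  then have "set s \<subseteq> {1, 2}" by simp
  then obtain w m \<sigma> where seq: "g_seq s = binom_of w" and w: "tail_shape w m \<sigma>"
    and deg: "pos_deg w = 4 + sum_list s" "pos_deg (- w) = 4 + sum_list s"
    using snoc.IH by blast
  have step: "g_seq (s @ [a]) = step a (binom_of w)"
    by (simp add: g_seq_def seq[symmetric])
  have "a = 1 \<or> a = 2" using snoc.prems by auto
  then show ?case
  proof
    assume "a = 1"
    then have "g_seq (s @ [a]) = binom_of (extend1 w m \<sigma>)"
      using step step1_binom_of[OF w] by (simp add: step_def)
    moreover have "pos_deg (extend1 w m \<sigma>) = 4 + sum_list (s @ [a])"
      "pos_deg (- extend1 w m \<sigma>) = 4 + sum_list (s @ [a])"
      using \<open>a = 1\<close> deg pos_deg_extend1[OF w] pos_deg_extend1[OF tail_shape_uminus[OF w]]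
      by (simp_all add: uminus_extend1)
    ultimately show ?case using tail_shape_extend1[OF w] by blast
  next
    assume "a = 2"
    then have "g_seq (s @ [a]) = binom_of (extend2 w m \<sigma>)"
      using step step2_binom_of[OF w] by (simp add: step_def)
    moreover have "pos_deg (extend2 w m \<sigma>) = 4 + sum_list (s @ [a])"
      "pos_deg (- extend2 w m \<sigma>) = 4 + sum_list (s @ [a])"
      using \<open>a = 2\<close> deg pos_deg_extend2[OF w] pos_deg_extend2[OF tail_shape_uminus[OF w]]
      by (simp_all add: uminus_extend2)
    ultimately show ?case using tail_shape_extend2[OF w] by blast
  qed
qed

lemma binom_deg_g_seq:
  assumes "set s \<subseteq> {1, 2}"
  shows "binom_deg (g_seq s) = 4 + sum_list s"
proof -
  obtain w m \<sigma> where "g_seq s = binom_of w" "pos_deg w = 4 + sum_list s"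
    "pos_deg (- w) = 4 + sum_list s"
    using g_seq_tail_shape[OF assms] by blast
  then show ?thesis by (simp add: binom_deg_binom_of)
qed

lemma sum_list_eq_0_iff_12: "set s \<subseteq> {1, 2} \<Longrightarrow> sum_list s = (0::nat) \<longleftrightarrow> s = []"
  by (cases s) auto

lemma g_seq_injective:
  assumes "set s \<subseteq> {1, 2}" and "set t \<subseteq> {1, 2}" and "g_seq s = g_seq t"
  shows "s = t"
  using assms
proof (induction s arbitrary: t rule: rev_induct)
  case Nil
  then have "sum_list t = 0" using binom_deg_g_seq[of "[]"] binom_deg_g_seq[of t] by simp
  then show ?case using Nil.prems(2) sum_list_eq_0_iff_12 by blast
next
  case (snoc a s)
  show ?case
  proof (cases t rule: rev_cases)
    case Nil
    then have "sum_list (s @ [a]) = 0"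
      using snoc.prems binom_deg_g_seq[of "[]"] binom_deg_g_seq[of "s @ [a]"] by simp
    then show ?thesis using snoc.prems(1) sum_list_eq_0_iff_12 by blast
  next
    case (snoc t' b)
    have s: "set s \<subseteq> {1, 2}" "a \<in> {1, 2}" and t': "set t' \<subseteq> {1, 2}" "b \<in> {1, 2}"
      using snoc.prems(1,2) \<open>t = t' @ [b]\<close> by auto
    obtain w m \<sigma> where w: "g_seq s = binom_of w" "tail_shape w m \<sigma>"
      using g_seq_tail_shape[OF s(1)] by blast
    obtain v n \<tau> where v: "g_seq t' = binom_of v" "tail_shape v n \<tau>"
      using g_seq_tail_shape[OF t'(1)] by blast
    have "step a (binom_of w) = step b (binom_of v)"
      using snoc.prems(3) \<open>t = t' @ [b]\<close> w(1) v(1) by (simp add: g_seq_def)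
    then have "a = b \<and> w = v"
      using step_binom_of_inj[OF w(2) v(2) s(2) t'(2)] by blast
    then show ?thesis
      using snoc.IH[OF s(1) t'(1)] \<open>t = t' @ [b]\<close> w(1) v(1) by simp
  qed
qed

definition compositions12 :: "nat \<Rightarrow> nat list set" where
  "compositions12 n = {s. set s \<subseteq> {1, 2} \<and> sum_list s = n}"

lemma compositions12_0: "compositions12 0 = {[]}"
  unfolding compositions12_def using sum_list_eq_0_iff_12 by auto

lemma compositions12_1: "compositions12 1 = {[1]}"
proof -
  have "s = [1]" if "set s \<subseteq> {1, 2}" "sum_list s = 1" for s :: "nat list"
    using that sum_list_eq_0_iff_12 by (cases s) auto
  then show ?thesis unfolding compositions12_def by auto
qed

lemma compositions12_Suc_Suc:
  "compositions12 (Suc (Suc n)) = Cons 1 ` compositions12 (Suc n) \<union> Cons 2 ` compositions12 n"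
proof
  show "compositions12 (Suc (Suc n)) \<subseteq> Cons 1 ` compositions12 (Suc n) \<union> Cons 2 ` compositions12 n"
  proof
    fix s assume s: "s \<in> compositions12 (Suc (Suc n))"
    then obtain x r where "s = x # r" "x = 1 \<or> x = 2"
      unfolding compositions12_def by (cases s) auto
    then show "s \<in> Cons 1 ` compositions12 (Suc n) \<union> Cons 2 ` compositions12 n"
      using s unfolding compositions12_def by auto
  qed
qed (auto simp: compositions12_def)

lemma card_compositions12: "finite (compositions12 n) \<and> card (compositions12 n) = fib (n + 1)"
proof (induction n rule: fib.induct)
  case 1
  then show ?case by (simp add: compositions12_0)
next
  case 2
  then show ?case using compositions12_1 by simp
next
  case (3 n)
  have "Cons 1 ` compositions12 (Suc n) \<inter> Cons 2 ` compositions12 n = {}" by auto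
  then show ?case
    using 3 unfolding compositions12_Suc_Suc by (simp add: card_Un_disjoint card_image)
qed

theorem corollary6p6:
  fixes d :: nat
  assumes "d \<ge> 3"
  shows "finite {g \<in> G'. binom_deg g = d} \<and> card {g \<in> G'. binom_deg g = d} = fib (d - 3)"
proof -
  let ?S = "{s. set s \<subseteq> {1, 2} \<and> 4 + sum_list s = d}"
  have image: "{g \<in> G'. binom_deg g = d} = g_seq ` ?S"
    unfolding G'_def using binom_deg_g_seq by auto
  have inj: "inj_on g_seq ?S"
    by (rule inj_onI) (use g_seq_injective in blast)
  have "finite ?S \<and> card ?S = fib (d - 3)"
  proof (cases "d = 3")
    case True
    then show ?thesis by simp
  next
    case False
    then have "?S = compositions12 (d - 4)" "d - 3 = d - 4 + 1"
      using assms unfolding compositions12_def by auto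
    then show ?thesis using card_compositions12 by presburger
  qed
  then show ?thesis unfolding image using inj by (simp add: card_image)
qed

end
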